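(* If the generating distribution is Markov to a chain graph satisfying tier symmetry and the causal ordering assumption, then the search space of Greedy Network Search consists of graphs that each belong to their own Markov equivalence class of size 1.
   Context: Setting: LWF chain graphs (graphs with directed and undirected edges and no partially directed cycles) over variables for units $i$ in blocks, each unit having baseline covariates $\mathbf{L}_i$, a treatment $A_i$ and an outcome $Y_i$. The within-unit structure is known and fixed; only cross-unit edges (network ties) between units $i \neq j$ are searched over. Causal ordering assumption: for each unit $i$, $\mathbf{L}_i \subseteq \mathrm{pa}(A_i)$ and $\mathbf{L}_i \cup \{A_i\} \subseteq \mathrm{pa}(Y_i)$, and cross-unit edges respect this ordering (e.g. $A_i \rightarrow Y_j$ allowed, $Y_j \rightarrow A_i$ ruled out). Tier symmetry: edges between variables of the same tier across units are undirected ($L_i - L_j$, $A_i - A_j$, $Y_i - Y_j$), and there are no undirected edges connecting different tiers (e.g. no $A_i - Y_j$). Greedy Network Search: starting from the complete (conditional) Markov random field on one tier ($\mathbf{L}$, $\mathbf{A}$ given $\mathbf{L}$, or $\mathbf{Y}$ given $\mathbf{L},\mathbf{A}$), it repeatedly deletes the single network-tie edge whose removal most increases the pseudolikelihood-based BIC score (PBIC $= 2\ln$ pseudolikelihood $- k\ln n$), stopping when no deletion improves the score. Thus the only edges added/removed in the search space are of the form $L_i - L_j$, $A_i - A_j$, $Y_i - Y_j$, $L_i \rightarrow A_j$, $L_i \rightarrow Y_j$, $A_i \rightarrow Y_j$. Two graphs are Markov equivalent if they imply the same conditional independences under the chain graph global Markov property. *)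

theory Defs
  imports Main
begin

text \<open>A graph on vertex set V is given by a directed edge relation (dir a b means a -> b)
and an undirected edge relation (und a b means a - b).\<close>

record 'v cgraph =
  dir :: "'v \<Rightarrow> 'v \<Rightarrow> bool"
  und :: "'v \<Rightarrow> 'v \<Rightarrow> bool"

definition edge_rel :: "'v cgraph \<Rightarrow> ('v \<times> 'v) set" where
  "edge_rel G = {(a, b). dir G a b \<or> und G a b}"

text \<open>Chain graph: edges only within V, undirected edges symmetric and loop-free,
and no partially directed cycle (a cycle containing at least one directed edge, all
directed edges pointing the same way along the cycle).\<close>
definition chain_graph :: "'v set \<Rightarrow> 'v cgraph \<Rightarrow> bool" where
  "chain_graph V G \<longleftrightarrow>
     (\<forall>a b. dir G a b \<longrightarrow> a \<in> V \<and> b \<in> V) \<and>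
     (\<forall>a b. und G a b \<longrightarrow> a \<in> V \<and> b \<in> V) \<and>
     (\<forall>a b. und G a b \<longrightarrow> und G b a) \<and>
     (\<forall>a. \<not> und G a a) \<and>
     (\<forall>a b. dir G a b \<longrightarrow> (b, a) \<notin> (edge_rel G)\<^sup>*)"

definition anterior :: "'v cgraph \<Rightarrow> 'v set \<Rightarrow> 'v set" where
  "anterior G S = {a. \<exists>s\<in>S. (a, s) \<in> (edge_rel G)\<^sup>*}"

definition comp_in :: "'v cgraph \<Rightarrow> 'v set \<Rightarrow> 'v \<Rightarrow> 'v set" where
  "comp_in G W t = {c \<in> W. (t, c) \<in> ({(a, b). a \<in> W \<and> b \<in> W \<and> und G a b})\<^sup>*}"

text \<open>Adjacency in the (LWF) moral graph of the subgraph induced by W: skeleton edges plus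
edges between any two parents of a common chain component.\<close>
definition moral_adj :: "'v cgraph \<Rightarrow> 'v set \<Rightarrow> 'v \<Rightarrow> 'v \<Rightarrow> bool" where
  "moral_adj G W a b \<longleftrightarrow> a \<in> W \<and> b \<in> W \<and> a \<noteq> b \<and>
     (dir G a b \<or> dir G b a \<or> und G a b \<or>
      (\<exists>t\<in>W. \<exists>t'\<in>comp_in G W t. dir G a t \<and> dir G b t'))"

definition separates :: "('v \<Rightarrow> 'v \<Rightarrow> bool) \<Rightarrow> 'v set \<Rightarrow> 'v set \<Rightarrow> 'v set \<Rightarrow> 'v set \<Rightarrow> bool" where
  "separates M W A B C \<longleftrightarrow>
     (\<forall>a\<in>A. \<forall>b\<in>B. (a, b) \<notin> ({(x, y). x \<in> W - C \<and> y \<in> W - C \<and> M x y})\<^sup>*)"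

text \<open>Conditional independence statements A _||_ B | C implied by the LWF global Markov property.\<close>
definition global_indeps :: "'v set \<Rightarrow> 'v cgraph \<Rightarrow> ('v set \<times> 'v set \<times> 'v set) set" where
  "global_indeps V G = {(A, B, C). A \<subseteq> V \<and> B \<subseteq> V \<and> C \<subseteq> V \<and>
      A \<inter> B = {} \<and> A \<inter> C = {} \<and> B \<inter> C = {} \<and>
      (let W = anterior G (A \<union> B \<union> C) in separates (moral_adj G W) W A B C)}"

definition markov_equiv :: "'v set \<Rightarrow> 'v cgraph \<Rightarrow> 'v cgraph \<Rightarrow> bool" where
  "markov_equiv V G H \<longleftrightarrow> global_indeps V G = global_indeps V H"

datatype tier = TL | TA | TY

fun tier_rank :: "tier \<Rightarrow> nat" where
  "tier_rank TL = 0" | "tier_rank TA = 1" | "tier_rank TY = 2"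

text \<open>Setup: each vertex belongs to a unit and a tier; each unit has exactly one treatment A_i
and one outcome Y_i; the fixed within-unit structure Dw/Uw satisfies the causal ordering
assumption L_i in pa(A_i) and L_i u {A_i} in pa(Y_i).\<close>
definition unit_setup :: "'v set \<Rightarrow> ('v \<Rightarrow> 'u) \<Rightarrow> ('v \<Rightarrow> tier) \<Rightarrow>
    ('v \<Rightarrow> 'v \<Rightarrow> bool) \<Rightarrow> ('v \<Rightarrow> 'v \<Rightarrow> bool) \<Rightarrow> bool" where
  "unit_setup V unit tr Dw Uw \<longleftrightarrow>
     (\<forall>i \<in> unit ` V. \<exists>!a. a \<in> V \<and> unit a = i \<and> tr a = TA) \<and>
     (\<forall>i \<in> unit ` V. \<exists>!y. y \<in> V \<and> unit y = i \<and> tr y = TY) \<and>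
     (\<forall>l\<in>V. \<forall>a\<in>V. unit l = unit a \<and> tr l = TL \<and> tr a = TA \<longrightarrow> Dw l a) \<and>
     (\<forall>x\<in>V. \<forall>y\<in>V. unit x = unit y \<and> tr x \<noteq> TY \<and> tr y = TY \<longrightarrow> Dw x y)"

text \<open>Graphs in the search space: chain graphs on V whose within-unit part is the fixed
structure and whose cross-unit edges (network ties) are of the forms
L_i - L_j, A_i - A_j, Y_i - Y_j, L_i -> A_j, L_i -> Y_j, A_i -> Y_j (tier symmetry and
causal ordering).\<close>
definition in_search_space :: "'v set \<Rightarrow> ('v \<Rightarrow> 'u) \<Rightarrow> ('v \<Rightarrow> tier) \<Rightarrow>
    ('v \<Rightarrow> 'v \<Rightarrow> bool) \<Rightarrow> ('v \<Rightarrow> 'v \<Rightarrow> bool) \<Rightarrow> 'v cgraph \<Rightarrow> bool" where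
  "in_search_space V unit tr Dw Uw G \<longleftrightarrow>
     chain_graph V G \<and>
     (\<forall>a\<in>V. \<forall>b\<in>V. unit a = unit b \<longrightarrow> dir G a b = Dw a b \<and> und G a b = Uw a b) \<and>
     (\<forall>a\<in>V. \<forall>b\<in>V. unit a \<noteq> unit b \<longrightarrow>
        (und G a b \<longrightarrow> tr a = tr b) \<and>
        (dir G a b \<longrightarrow> tier_rank (tr a) < tier_rank (tr b)))"

end

theory Submission
  imports Defs
begin

text \<open>Markov equivalent chain graphs have the same skeleton: if a and b are adjacent they
are never separated, while if they are not adjacent then the rest of their anterior set
separates them, because a common child of a and b (or of their chain components) would
have to lie in the anterior set of a or b, creating a partially directed cycle.
In the search space the within-unit edges are fixed and a cross-unit adjacency between
two vertices has only one admissible type: undirected if they are in the same tier, and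
directed from the lower to the higher tier otherwise. Hence the skeleton determines the
whole graph.\<close>

definition adjacent :: "'v cgraph \<Rightarrow> 'v \<Rightarrow> 'v \<Rightarrow> bool" where
  "adjacent G a b \<longleftrightarrow> dir G a b \<or> dir G b a \<or> und G a b \<or> und G b a"

lemma chain_graph_und_sym: "chain_graph V G \<Longrightarrow> und G a b \<Longrightarrow> und G b a"
  unfolding chain_graph_def by blast

lemma chain_graph_dir_not_reaches_back:
  "chain_graph V G \<Longrightarrow> dir G a b \<Longrightarrow> (b, a) \<notin> (edge_rel G)\<^sup>*"
  unfolding chain_graph_def by blast

lemma chain_graph_dir_in_V: "chain_graph V G \<Longrightarrow> dir G a b \<Longrightarrow> a \<in> V \<and> b \<in> V"
  unfolding chain_graph_def by blast

lemma chain_graph_und_in_V: "chain_graph V G \<Longrightarrow> und G a b \<Longrightarrow> a \<in> V \<and> b \<in> V"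
  unfolding chain_graph_def by blast

lemma chain_graph_edge_rel_in_V:
  assumes "chain_graph V G" and "(a, b) \<in> edge_rel G"
  shows "a \<in> V"
  using assms(2) chain_graph_dir_in_V[OF assms(1)] chain_graph_und_in_V[OF assms(1)]
  unfolding edge_rel_def by blast

lemma chain_graph_edge_distinct_vertices:
  assumes "chain_graph V G" and "dir G a b \<or> und G a b"
  shows "a \<in> V \<and> b \<in> V \<and> a \<noteq> b"
proof -
  have "\<not> dir G a a"
    using chain_graph_dir_not_reaches_back[OF assms(1)] by blast
  moreover have "\<not> und G a a"
    using assms(1) unfolding chain_graph_def by blast
  ultimately have "a \<noteq> b"
    using assms(2) by blast
  moreover have "a \<in> V \<and> b \<in> V"
    using assms(2) chain_graph_dir_in_V[OF assms(1)] chain_graph_und_in_V[OF assms(1)] by blast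
  ultimately show ?thesis
    by blast
qed

lemma subset_anterior: "S \<subseteq> anterior G S"
  unfolding anterior_def by blast

lemma anterior_idem: "anterior G (anterior G S) = anterior G S"
  unfolding anterior_def by (blast intro: rtrancl_trans)

lemma anterior_subset:
  assumes "chain_graph V G"
  shows "anterior G S \<subseteq> V \<union> S"
proof
  fix x assume "x \<in> anterior G S"
  then obtain s where "s \<in> S" "(x, s) \<in> (edge_rel G)\<^sup>*"
    unfolding anterior_def by blast
  show "x \<in> V \<union> S"
  proof (cases "x = s")
    case False
    with \<open>(x, s) \<in> (edge_rel G)\<^sup>*\<close> obtain y where "(x, y) \<in> edge_rel G"
      by (metis converse_rtranclE)
    then show ?thesis using chain_graph_edge_rel_in_V[OF assms] by blast
  qed (simp add: \<open>s \<in> S\<close>)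
qed

lemma comp_in_reaches:
  assumes "chain_graph V G" and "t' \<in> comp_in G W t"
  shows "(t', t) \<in> (edge_rel G)\<^sup>*"
proof -
  have "(t, t') \<in> {(a, b). a \<in> W \<and> b \<in> W \<and> und G a b}\<^sup>*"
    using assms(2) unfolding comp_in_def by blast
  then show ?thesis
  proof (induction rule: rtrancl_induct)
    case (step y z)
    then have "(z, y) \<in> edge_rel G"
      using chain_graph_und_sym[OF assms(1)] unfolding edge_rel_def by blast
    then show ?case using step.IH by (rule converse_rtrancl_into_rtrancl)
  qed simp
qed

lemma global_indeps_separates:
  "(A, B, C) \<in> global_indeps V G \<Longrightarrow>
    separates (moral_adj G (anterior G (A \<union> B \<union> C))) (anterior G (A \<union> B \<union> C)) A B C"
  unfolding global_indeps_def Let_def by simp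

lemma adjacent_not_in_global_indeps:
  assumes "chain_graph V G" and "adjacent G a b" and "a \<noteq> b" and "a \<notin> C" and "b \<notin> C"
  shows "({a}, {b}, C) \<notin> global_indeps V G"
proof
  define W where "W = anterior G ({a} \<union> {b} \<union> C)"
  assume "({a}, {b}, C) \<in> global_indeps V G"
  then have sep: "separates (moral_adj G W) W {a} {b} C"
    unfolding W_def by (rule global_indeps_separates)
  have "a \<in> W" "b \<in> W"
    unfolding W_def anterior_def by auto
  moreover have "dir G a b \<or> dir G b a \<or> und G a b"
    using assms(2) chain_graph_und_sym[OF assms(1)] unfolding adjacent_def by blast
  ultimately have "moral_adj G W a b"
    using assms(3) unfolding moral_adj_def by blast
  with \<open>a \<in> W\<close> \<open>b \<in> W\<close> assms(4,5)
  have "(a, b) \<in> {(x, y). x \<in> W - C \<and> y \<in> W - C \<and> moral_adj G W x y}\<^sup>*"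
    by (intro r_into_rtrancl) simp
  with sep show False
    unfolding separates_def by simp
qed

lemma nonadjacent_not_moral_adj:
  assumes cg: "chain_graph V G" and "\<not> adjacent G a b"
  shows "\<not> moral_adj G (anterior G {a, b}) a b"
proof
  define W where "W = anterior G {a, b}"
  assume "moral_adj G W a b"
  then obtain t t' where "t \<in> W" "t' \<in> comp_in G W t" "dir G a t" "dir G b t'"
    using assms(2) unfolding moral_adj_def adjacent_def by blast
  moreover from \<open>t \<in> W\<close> obtain s where "s \<in> {a, b}" "(t, s) \<in> (edge_rel G)\<^sup>*"
    unfolding W_def anterior_def by blast
  moreover have "(t', t) \<in> (edge_rel G)\<^sup>*"
    using comp_in_reaches[OF cg \<open>t' \<in> comp_in G W t\<close>] .
  ultimately show False
    using chain_graph_dir_not_reaches_back[OF cg] by (blast intro: rtrancl_trans)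
qed

lemma nonadjacent_in_global_indeps:
  assumes cg: "chain_graph V G" and "a \<noteq> b" "a \<in> V" "b \<in> V" and "\<not> adjacent G a b"
  shows "({a}, {b}, anterior G {a, b} - {a, b}) \<in> global_indeps V G"
proof -
  define W where "W = anterior G {a, b}"
  define C where "C = W - {a, b}"
  have "{a} \<union> {b} \<union> C = W"
    using subset_anterior[of "{a, b}" G] unfolding C_def W_def by blast
  then have W_eq: "anterior G ({a} \<union> {b} \<union> C) = W"
    using anterior_idem unfolding W_def by simp
  have "\<not> moral_adj G W x y" if "x \<in> {a, b}" "y \<in> {a, b}" for x y
  proof (cases "x = y")
    case False
    then have "{x, y} = {a, b}" using that by blast
    moreover have "\<not> adjacent G x y"
      using assms(5) \<open>{x, y} = {a, b}\<close> unfolding adjacent_def doubleton_eq_iff by blast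
    ultimately show ?thesis
      using nonadjacent_not_moral_adj[OF cg, of x y] unfolding W_def by simp
  qed (simp add: moral_adj_def)
  then have no_edges: "{(x, y). x \<in> W - C \<and> y \<in> W - C \<and> moral_adj G W x y} = {}"
    unfolding C_def by blast
  have "separates (moral_adj G W) W {a} {b} C"
    using \<open>a \<noteq> b\<close> unfolding separates_def no_edges by simp
  moreover have "C \<subseteq> V" "a \<notin> C" "b \<notin> C"
    using anterior_subset[OF cg] assms(3,4) unfolding C_def W_def by blast+
  ultimately have "({a}, {b}, C) \<in> global_indeps V G"
    using assms(2-4) unfolding global_indeps_def Let_def mem_Collect_eq case_prod_conv W_eq
    by blast
  then show ?thesis
    unfolding C_def W_def .
qed

lemma markov_equiv_adjacent_iff:
  assumes "chain_graph V G" "chain_graph V H" "markov_equiv V G H"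
    and "a \<in> V" "b \<in> V" "a \<noteq> b"
  shows "adjacent G a b \<longleftrightarrow> adjacent H a b"
proof -
  have transfer: "adjacent K a b"
    if K: "chain_graph V K" and K': "chain_graph V K'" "adjacent K' a b"
      and same: "global_indeps V K = global_indeps V K'" for K K'
  proof (rule ccontr)
    let ?C = "anterior K {a, b} - {a, b}"
    assume "\<not> adjacent K a b"
    then have "({a}, {b}, ?C) \<in> global_indeps V K'"
      using nonadjacent_in_global_indeps[OF K assms(6,4,5)] same by simp
    moreover have "({a}, {b}, ?C) \<notin> global_indeps V K'"
      by (rule adjacent_not_in_global_indeps[OF K' assms(6)]) simp_all
    ultimately show False
      by contradiction
  qed
  have same: "global_indeps V G = global_indeps V H"
    using assms(3) unfolding markov_equiv_def .
  show ?thesis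
    using transfer[OF assms(1,2) _ same] transfer[OF assms(2,1) _ same[symmetric]] by blast
qed

lemma in_search_space_cross_unit:
  assumes "in_search_space V unit tr Dw Uw G" "a \<in> V" "b \<in> V" "unit a \<noteq> unit b"
  shows "und G a b \<Longrightarrow> tr a = tr b"
    and "dir G a b \<Longrightarrow> tier_rank (tr a) < tier_rank (tr b)"
  using assms unfolding in_search_space_def by blast+

lemma tier_rank_inject: "tier_rank x = tier_rank y \<longleftrightarrow> x = y"
  by (cases x; cases y) simp_all

lemma search_space_edges_eqI:
  assumes G: "in_search_space V unit tr Dw Uw G" and H: "in_search_space V unit tr Dw Uw H"
    and "a \<in> V" "b \<in> V" and adj: "adjacent G a b \<longleftrightarrow> adjacent H a b"
  shows "dir G a b = dir H a b \<and> und G a b = und H a b"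
proof (cases "unit a = unit b")
  case True
  have "dir K a b = Dw a b \<and> und K a b = Uw a b" if "in_search_space V unit tr Dw Uw K" for K
    using that assms(3,4) True unfolding in_search_space_def by blast
  then show ?thesis using G H by simp
next
  case False
  note G_cross = in_search_space_cross_unit[OF G assms(3,4) False]
    in_search_space_cross_unit[OF G assms(4,3) False[symmetric]]
  note H_cross = in_search_space_cross_unit[OF H assms(3,4) False]
    in_search_space_cross_unit[OF H assms(4,3) False[symmetric]]
  have "und G b a = und G a b" "und H b a = und H a b"
    using G H chain_graph_und_sym unfolding in_search_space_def by metis+
  then have adj': "dir G a b \<or> dir G b a \<or> und G a b \<longleftrightarrow> dir H a b \<or> dir H b a \<or> und H a b"
    using adj unfolding adjacent_def by simp
  consider "tr a = tr b" | "tier_rank (tr a) < tier_rank (tr b)" | "tier_rank (tr b) < tier_rank (tr a)"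
    using tier_rank_inject linorder_neqE_nat by metis
  then show ?thesis
  proof cases
    case 1
    then have "\<not> dir G a b" "\<not> dir G b a" "\<not> dir H a b" "\<not> dir H b a"
      using G_cross(2,4) H_cross(2,4) by auto
    then show ?thesis using adj' by simp
  next
    case 2
    then have "\<not> und G a b" "\<not> dir G b a" "\<not> und H a b" "\<not> dir H b a"
      using G_cross(1,4) H_cross(1,4) by auto
    then show ?thesis using adj' by simp
  next
    case 3
    then have "\<not> und G a b" "\<not> dir G a b" "\<not> und H a b" "\<not> dir H a b"
      using G_cross(1,2) H_cross(1,2) by auto
    then show ?thesis using adj' by simp
  qed
qed

lemma in_search_space_eqI:
  assumes G: "in_search_space V unit tr Dw Uw G" and H: "in_search_space V unit tr Dw Uw H"
    and same_skeleton: "\<And>a b. a \<in> V \<Longrightarrow> b \<in> V \<Longrightarrow> a \<noteq> b \<Longrightarrow> adjacent G a b \<longleftrightarrow> adjacent H a b"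
  shows "G = H"
proof -
  have cg: "chain_graph V G" "chain_graph V H"
    using G H unfolding in_search_space_def by blast+
  have "dir G a b = dir H a b \<and> und G a b = und H a b" for a b
  proof (cases "a \<in> V \<and> b \<in> V \<and> a \<noteq> b")
    case True
    then show ?thesis
      using same_skeleton by (intro search_space_edges_eqI[OF G H]) auto
  next
    case False
    have "\<not> dir K a b \<and> \<not> und K a b" if "chain_graph V K" for K
      using chain_graph_edge_distinct_vertices[OF that] False by blast
    then show ?thesis
      using cg by blast
  qed
  then show "G = H"
    by (intro cgraph.equality ext) simp_all
qed

theorem lemma3:
  fixes V :: "'v set" and unit :: "'v \<Rightarrow> 'u" and tr :: "'v \<Rightarrow> tier"
    and Dw Uw :: "'v \<Rightarrow> 'v \<Rightarrow> bool" and G :: "'v cgraph"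
  assumes "finite V"
    and "unit_setup V unit tr Dw Uw"
    and "in_search_space V unit tr Dw Uw G"
  shows "{H. in_search_space V unit tr Dw Uw H \<and> markov_equiv V G H} = {G}"
proof -
  have "H = G" if H: "in_search_space V unit tr Dw Uw H" and equiv: "markov_equiv V G H" for H
  proof -
    have cg: "chain_graph V G" "chain_graph V H"
      using assms(3) H unfolding in_search_space_def by blast+
    show "H = G"
      using markov_equiv_adjacent_iff[OF cg equiv]
      by (intro in_search_space_eqI[OF H assms(3)]) simp
  qed
  moreover have "markov_equiv V G G"
    unfolding markov_equiv_def ..
  ultimately show ?thesis
    using assms(3) by blast
qed

end
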